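(* Let $T=(V,E)$ be a decision tree with root $r$. Define $w:V\to\mathbb{R}_{\ge0}$ by $w_v=0$ for every leaf $v$ and, recursively for every internal node $v$ with children $C_v$, $w_v$ equal to the optimal value of the semidefinite program \[\min\ \max_{c\in C_v}\big(w_c+X[c,c]+Y[c,c]\big)\quad\text{s.t.}\quad X[c_1,c_2]-Y[c_1,c_2]=1\ \ (c_1,c_2\in C_v,\ c_1\ne c_2),\qquad 0\preceq X,Y\in\mathbb{R}^{C_v\times C_v}.\] Then $w$ is an optimal weighting scheme for $T$, i.e. $w$ is a weighting scheme and $w_r=\mathsf{WDT}(T)$.
   Context: A decision tree is a finite rooted tree whose internal nodes each query a coordinate of the input and whose children correspond to distinct query outcomes; leaves carry outputs. A weighting scheme for $T$ is $w:V\to\mathbb{R}_{\ge0}$ such that $w_v=0$ for all leaves and, for every internal node $v$ with children $C_v$, there exist positive semidefinite $X,Y\in\mathbb{C}^{C_v\times C_v}$ with $X[c_1,c_2]-Y[c_1,c_2]=1$ for all distinct $c_1,c_2\in C_v$ and $w_v-w_c\ge X[c,c]+Y[c,c]$ for all $c\in C_v$. $\mathsf{WDT}(T)$ is the minimum of $w_r$ over all weighting schemes $w$ for $T$. *)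

theory Defs
  imports Complex_Main
begin

text \<open>A finite rooted tree on vertex set V with root r, given by a children map ch.
  Only the tree shape of a decision tree matters for weighting schemes.\<close>
definition rooted_tree :: "'v set \<Rightarrow> 'v \<Rightarrow> ('v \<Rightarrow> 'v set) \<Rightarrow> bool" where
  "rooted_tree V r ch \<longleftrightarrow>
     finite V \<and> r \<in> V \<and> (\<forall>v\<in>V. ch v \<subseteq> V) \<and> (\<forall>v\<in>V. r \<notin> ch v) \<and>
     (\<forall>u\<in>V - {r}. \<exists>!p. p \<in> V \<and> u \<in> ch p) \<and>
     (\<forall>v\<in>V. (r, v) \<in> {(a, b). a \<in> V \<and> b \<in> ch a}\<^sup>*)"

definition is_leaf :: "('v \<Rightarrow> 'v set) \<Rightarrow> 'v \<Rightarrow> bool" where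
  "is_leaf ch v \<longleftrightarrow> ch v = {}"

definition psd_complex :: "'v set \<Rightarrow> ('v \<Rightarrow> 'v \<Rightarrow> complex) \<Rightarrow> bool" where
  "psd_complex C X \<longleftrightarrow>
     (\<forall>z :: 'v \<Rightarrow> complex.
        Im (\<Sum>a\<in>C. \<Sum>b\<in>C. cnj (z a) * X a b * z b) = 0 \<and>
        0 \<le> Re (\<Sum>a\<in>C. \<Sum>b\<in>C. cnj (z a) * X a b * z b))"

definition psd_real :: "'v set \<Rightarrow> ('v \<Rightarrow> 'v \<Rightarrow> real) \<Rightarrow> bool" where
  "psd_real C X \<longleftrightarrow>
     (\<forall>a\<in>C. \<forall>b\<in>C. X a b = X b a) \<and>
     (\<forall>z :: 'v \<Rightarrow> real. 0 \<le> (\<Sum>a\<in>C. \<Sum>b\<in>C. z a * X a b * z b))"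

definition weighting_scheme :: "'v set \<Rightarrow> ('v \<Rightarrow> 'v set) \<Rightarrow> ('v \<Rightarrow> real) \<Rightarrow> bool" where
  "weighting_scheme V ch w \<longleftrightarrow>
     (\<forall>v\<in>V. 0 \<le> w v) \<and>
     (\<forall>v\<in>V. is_leaf ch v \<longrightarrow> w v = 0) \<and>
     (\<forall>v\<in>V. \<not> is_leaf ch v \<longrightarrow>
        (\<exists>X Y. psd_complex (ch v) X \<and> psd_complex (ch v) Y \<and>
           (\<forall>c1\<in>ch v. \<forall>c2\<in>ch v. c1 \<noteq> c2 \<longrightarrow> X c1 c2 - Y c1 c2 = 1) \<and>
           (\<forall>c\<in>ch v. Re (X c c) + Re (Y c c) \<le> w v - w c)))"

definition WDT :: "'v set \<Rightarrow> 'v \<Rightarrow> ('v \<Rightarrow> 'v set) \<Rightarrow> real" where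
  "WDT V r ch = Inf {w r | w. weighting_scheme V ch w}"

definition sdp_value :: "'v set \<Rightarrow> ('v \<Rightarrow> real) \<Rightarrow> real" where
  "sdp_value C w = Inf {Max ((\<lambda>c. w c + X c c + Y c c) ` C) | X Y.
       psd_real C X \<and> psd_real C Y \<and>
       (\<forall>c1\<in>C. \<forall>c2\<in>C. c1 \<noteq> c2 \<longrightarrow> X c1 c2 - Y c1 c2 = 1)}"

end

theory Submission
  imports Defs "HOL-Analysis.Analysis"
begin

text \<open>
  Minimality: if w' is any weighting scheme, then by induction from the leaves w \<le> w'.
  At an internal node v the real parts of the complex certificate of w' form a feasible
  point of the local SDP, and replacing the child weights w' by the smaller w only lowers
  its objective, so w v = sdp_value \<le> w' v.

  Admissibility: w is itself a weighting scheme because each local SDP attains its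
  infimum. Along a minimizing sequence the diagonal entries are bounded by the objective
  and, by positive semidefiniteness, so are all other entries; a convergent subsequence
  has a feasible limit (the constraints are closed) whose objective is optimal.
\<close>

lemma double_sum_mono_neutral:
  fixes F :: "'a \<Rightarrow> 'a \<Rightarrow> 'b::comm_monoid_add"
  assumes "finite C" "S \<subseteq> C" "\<And>x y. x \<notin> S \<or> y \<notin> S \<Longrightarrow> F x y = 0"
  shows "(\<Sum>x\<in>C. \<Sum>y\<in>C. F x y) = (\<Sum>x\<in>S. \<Sum>y\<in>S. F x y)"
proof -
  have "(\<Sum>x\<in>C. \<Sum>y\<in>C. F x y) = (\<Sum>x\<in>C. \<Sum>y\<in>S. F x y)"
    by (intro sum.cong refl sum.mono_neutral_right) (use assms in auto)
  also have "\<dots> = (\<Sum>x\<in>S. \<Sum>y\<in>S. F x y)"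
    by (rule sum.mono_neutral_right) (use assms in auto)
  finally show ?thesis .
qed

lemma psd_real_form_nonneg:
  "psd_real C X \<Longrightarrow> 0 \<le> (\<Sum>a\<in>C. \<Sum>b\<in>C. z a * X a b * z b)"
  by (simp add: psd_real_def)

lemma psd_real_diag_nonneg:
  assumes "finite C" "psd_real C X" "a \<in> C"
  shows "0 \<le> X a a"
proof -
  let ?z = "\<lambda>x. if x = a then 1 else 0 :: real"
  have "0 \<le> (\<Sum>x\<in>C. \<Sum>y\<in>C. ?z x * X x y * ?z y)"
    by (rule psd_real_form_nonneg[OF assms(2)])
  also have "\<dots> = (\<Sum>x\<in>{a}. \<Sum>y\<in>{a}. ?z x * X x y * ?z y)"
    by (rule double_sum_mono_neutral) (use assms in auto)
  finally show ?thesis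
    by simp
qed

lemma psd_real_abs_le:
  assumes "finite C" "psd_real C X" "a \<in> C" "b \<in> C"
  shows "2 * \<bar>X a b\<bar> \<le> X a a + X b b"
proof (cases "a = b")
  case True
  then show ?thesis using psd_real_diag_nonneg[OF assms(1-3)] by simp
next
  case False
  have "0 \<le> X a a + X b b + 2 * s * X a b" if "s * s = 1" for s :: real
  proof -
    let ?z = "\<lambda>x. if x = a then 1 else if x = b then s else 0"
    have "0 \<le> (\<Sum>x\<in>C. \<Sum>y\<in>C. ?z x * X x y * ?z y)"
      by (rule psd_real_form_nonneg[OF assms(2)])
    also have "\<dots> = (\<Sum>x\<in>{a,b}. \<Sum>y\<in>{a,b}. ?z x * X x y * ?z y)"
      by (rule double_sum_mono_neutral) (use assms in auto)
    also have "\<dots> = X a a + X b b + 2 * s * X a b"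
      using False assms that unfolding psd_real_def by (simp add: algebra_simps)
    finally show ?thesis .
  qed
  from this[of 1] this[of "-1"] show ?thesis by linarith
qed

lemma psd_complex_Re:
  assumes "finite C" "psd_complex C X"
  shows "psd_real C (\<lambda>a b. Re (X a b))"
proof -
  have form_Im: "Im (\<Sum>x\<in>C. \<Sum>y\<in>C. cnj (z x) * X x y * z y) = 0"
   and form_Re: "0 \<le> Re (\<Sum>x\<in>C. \<Sum>y\<in>C. cnj (z x) * X x y * z y)" for z
    using assms(2) unfolding psd_complex_def by blast+
  have diag: "Im (X c c) = 0" if "c \<in> C" for c
  proof -
    let ?z = "\<lambda>x. if x = c then 1 else 0 :: complex"
    have "(\<Sum>x\<in>C. \<Sum>y\<in>C. cnj (?z x) * X x y * ?z y) = X c c"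
      by (subst double_sum_mono_neutral[where S="{c}"]) (use assms that in auto)
    then show ?thesis using form_Im[of ?z] by simp
  qed
  have off_diag: "Re (X a b) = Re (X b a)" if "a \<in> C" "b \<in> C" "a \<noteq> b" for a b
  proof -
    let ?z = "\<lambda>x. if x = a then 1 else if x = b then \<i> else 0 :: complex"
    have "Im (\<Sum>x\<in>C. \<Sum>y\<in>C. cnj (?z x) * X x y * ?z y)
        = Im (X a a) + Im (X b b) + Re (X a b) - Re (X b a)"
      by (subst double_sum_mono_neutral[where S="{a,b}"]) (use assms that in auto)
    then show ?thesis using form_Im[of ?z] diag that by simp
  qed
  show ?thesis
    unfolding psd_real_def
  proof (intro conjI ballI allI)
    fix a b
    assume "a \<in> C" "b \<in> C"
    then show "Re (X a b) = Re (X b a)"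
      using off_diag by (cases "a = b") auto
  next
    fix z :: "'a \<Rightarrow> real"
    show "0 \<le> (\<Sum>a\<in>C. \<Sum>b\<in>C. z a * Re (X a b) * z b)"
      using form_Re[of "\<lambda>x. of_real (z x)"] by (simp add: Re_sum)
  qed
qed

lemma psd_real_of_real:
  assumes "psd_real C X"
  shows "psd_complex C (\<lambda>a b. of_real (X a b))"
  unfolding psd_complex_def
proof (intro allI conjI)
  fix z :: "'a \<Rightarrow> complex"
  have sym: "X a b = X b a" if "a \<in> C" "b \<in> C" for a b
    using assms that unfolding psd_real_def by blast
  have "(\<Sum>a\<in>C. \<Sum>b\<in>C. X a b * (Im (z a) * Re (z b)))
      = (\<Sum>b\<in>C. \<Sum>a\<in>C. X a b * (Im (z a) * Re (z b)))"
    by (rule sum.swap)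
  also have "\<dots> = (\<Sum>a\<in>C. \<Sum>b\<in>C. X a b * (Re (z a) * Im (z b)))"
    by (intro sum.cong refl) (simp add: sym mult.commute)
  finally show "Im (\<Sum>a\<in>C. \<Sum>b\<in>C. cnj (z a) * of_real (X a b) * z b) = 0"
    by (simp add: Im_sum algebra_simps sum_subtractf)
  have "Re (\<Sum>a\<in>C. \<Sum>b\<in>C. cnj (z a) * of_real (X a b) * z b)
      = (\<Sum>a\<in>C. \<Sum>b\<in>C. Re (z a) * X a b * Re (z b))
      + (\<Sum>a\<in>C. \<Sum>b\<in>C. Im (z a) * X a b * Im (z b))"
    by (simp add: Re_sum algebra_simps sum.distrib)
  moreover have "0 \<le> (\<Sum>a\<in>C. \<Sum>b\<in>C. Re (z a) * X a b * Re (z b))"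
    and "0 \<le> (\<Sum>a\<in>C. \<Sum>b\<in>C. Im (z a) * X a b * Im (z b))"
    by (rule psd_real_form_nonneg[OF assms])+
  ultimately show "0 \<le> Re (\<Sum>a\<in>C. \<Sum>b\<in>C. cnj (z a) * of_real (X a b) * z b)"
    by linarith
qed

lemma psd_real_limit:
  assumes psd: "\<And>k. psd_real C (Xs k)"
    and lim: "\<And>a b. a \<in> C \<Longrightarrow> b \<in> C \<Longrightarrow> (\<lambda>k. Xs k a b) \<longlonglongrightarrow> X a b"
  shows "psd_real C X"
  unfolding psd_real_def
proof (intro conjI ballI allI)
  fix a b assume ab: "a \<in> C" "b \<in> C"
  have "(\<lambda>k. Xs k a b) \<longlonglongrightarrow> X b a"
    using lim[OF ab(2,1)] psd ab unfolding psd_real_def by simp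
  then show "X a b = X b a" using lim[OF ab] LIMSEQ_unique by blast
next
  fix z :: "'a \<Rightarrow> real"
  have "(\<lambda>k. \<Sum>a\<in>C. \<Sum>b\<in>C. z a * Xs k a b * z b) \<longlonglongrightarrow> (\<Sum>a\<in>C. \<Sum>b\<in>C. z a * X a b * z b)"
    by (intro tendsto_sum tendsto_mult tendsto_const lim)
  then show "0 \<le> (\<Sum>a\<in>C. \<Sum>b\<in>C. z a * X a b * z b)"
    by (rule LIMSEQ_le_const) (use psd_real_form_nonneg[OF psd] in blast)
qed

lemma bounded_family_convergent_subseq:
  fixes f :: "nat \<Rightarrow> 'p \<Rightarrow> 'c::heine_borel"
  assumes "finite S" "\<And>p. p \<in> S \<Longrightarrow> bounded (range (\<lambda>k. f k p))"
  shows "\<exists>l r. strict_mono r \<and> (\<forall>p\<in>S. (\<lambda>k. f (r k) p) \<longlonglongrightarrow> l p)"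
proof -
  have "\<And>p. p \<in> S \<Longrightarrow> bounded ((\<lambda>g. g p) ` range f)"
    using assms(2) by (simp add: image_image)
  then have "\<forall>d\<subseteq>S. \<exists>l r. strict_mono r \<and>
      (\<forall>e>0. \<forall>\<^sub>F k in sequentially. \<forall>p\<in>d. dist (f (r k) p) (l p) < e)"
    by (rule compact_lemma_general[where proj="\<lambda>g p. g p" and unproj=id, OF assms(1)]) simp_all
  then obtain l r where r: "strict_mono r"
    and conv: "\<forall>e>0. \<forall>\<^sub>F k in sequentially. \<forall>p\<in>S. dist (f (r k) p) (l p) < e"
    by blast
  have "(\<lambda>k. f (r k) p) \<longlonglongrightarrow> l p" if "p \<in> S" for p
  proof (rule tendstoI)
    fix e :: real
    assume "e > 0"
    with conv have "\<forall>\<^sub>F k in sequentially. \<forall>p\<in>S. dist (f (r k) p) (l p) < e"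
      by blast
    then show "\<forall>\<^sub>F k in sequentially. dist (f (r k) p) (l p) < e"
      by (rule eventually_mono) (use that in blast)
  qed
  with r show ?thesis by blast
qed

definition sdp_feasible :: "'v set \<Rightarrow> ('v \<Rightarrow> 'v \<Rightarrow> real) \<Rightarrow> ('v \<Rightarrow> 'v \<Rightarrow> real) \<Rightarrow> bool" where
  "sdp_feasible C X Y \<longleftrightarrow> psd_real C X \<and> psd_real C Y \<and>
     (\<forall>c1\<in>C. \<forall>c2\<in>C. c1 \<noteq> c2 \<longrightarrow> X c1 c2 - Y c1 c2 = 1)"

lemma sdp_feasible_const: "sdp_feasible C (\<lambda>_ _. 1) (\<lambda>_ _. 0)"
proof -
  have "psd_real C (\<lambda>_ _. 1)"
    unfolding psd_real_def
  proof (intro conjI ballI allI)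
    fix z :: "'a \<Rightarrow> real"
    have "(\<Sum>a\<in>C. \<Sum>b\<in>C. z a * 1 * z b) = (\<Sum>a\<in>C. z a)\<^sup>2"
      by (simp add: power2_eq_square sum_product)
    then show "0 \<le> (\<Sum>a\<in>C. \<Sum>b\<in>C. z a * 1 * z b)"
      by simp
  qed simp
  moreover have "psd_real C (\<lambda>_ _. 0)"
    by (simp add: psd_real_def)
  ultimately show ?thesis
    by (simp add: sdp_feasible_def)
qed

lemma sdp_feasible_limit:
  assumes feasible: "\<And>k. sdp_feasible C (Xs k) (Ys k)"
    and lim_X: "\<And>a b. a \<in> C \<Longrightarrow> b \<in> C \<Longrightarrow> (\<lambda>k. Xs k a b) \<longlonglongrightarrow> X a b"
    and lim_Y: "\<And>a b. a \<in> C \<Longrightarrow> b \<in> C \<Longrightarrow> (\<lambda>k. Ys k a b) \<longlonglongrightarrow> Y a b"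
  shows "sdp_feasible C X Y"
proof -
  have "psd_real C X"
    by (rule psd_real_limit[of C Xs, OF _ lim_X]) (use feasible in \<open>simp_all add: sdp_feasible_def\<close>)
  moreover have "psd_real C Y"
    by (rule psd_real_limit[of C Ys, OF _ lim_Y]) (use feasible in \<open>simp_all add: sdp_feasible_def\<close>)
  moreover have "X a b - Y a b = 1" if "a \<in> C" "b \<in> C" "a \<noteq> b" for a b
  proof -
    have "(\<lambda>k. Xs k a b - Ys k a b) \<longlonglongrightarrow> X a b - Y a b"
      using lim_X lim_Y that by (intro tendsto_diff)
    moreover have "(\<lambda>k. Xs k a b - Ys k a b) = (\<lambda>k. 1)"
      using feasible that by (simp add: sdp_feasible_def)
    ultimately show ?thesis
      by (simp add: LIMSEQ_const_iff)
  qed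
  ultimately show ?thesis
    by (simp add: sdp_feasible_def)
qed

lemma exists_psd_complex_iff_sdp_feasible:
  assumes "finite C"
  shows "(\<exists>X Y. psd_complex C X \<and> psd_complex C Y \<and>
            (\<forall>c1\<in>C. \<forall>c2\<in>C. c1 \<noteq> c2 \<longrightarrow> X c1 c2 - Y c1 c2 = 1) \<and>
            (\<forall>c\<in>C. Re (X c c) + Re (Y c c) \<le> t - w c))
     \<longleftrightarrow> (\<exists>X Y. sdp_feasible C X Y \<and> (\<forall>c\<in>C. w c + X c c + Y c c \<le> t))"
proof
  assume "\<exists>X Y. psd_complex C X \<and> psd_complex C Y \<and>
            (\<forall>c1\<in>C. \<forall>c2\<in>C. c1 \<noteq> c2 \<longrightarrow> X c1 c2 - Y c1 c2 = 1) \<and>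
            (\<forall>c\<in>C. Re (X c c) + Re (Y c c) \<le> t - w c)"
  then obtain X Y where "psd_complex C X" "psd_complex C Y"
    and "\<forall>c1\<in>C. \<forall>c2\<in>C. c1 \<noteq> c2 \<longrightarrow> X c1 c2 - Y c1 c2 = 1"
    and "\<forall>c\<in>C. Re (X c c) + Re (Y c c) \<le> t - w c"
    by blast
  then have "sdp_feasible C (\<lambda>a b. Re (X a b)) (\<lambda>a b. Re (Y a b))"
    and "\<forall>c\<in>C. w c + Re (X c c) + Re (Y c c) \<le> t"
    using psd_complex_Re[OF assms] by (auto simp: sdp_feasible_def complex_eq_iff)
  then show "\<exists>X Y. sdp_feasible C X Y \<and> (\<forall>c\<in>C. w c + X c c + Y c c \<le> t)"
    by (intro exI[of _ "\<lambda>a b. Re (X a b)"] exI[of _ "\<lambda>a b. Re (Y a b)"]) simp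
next
  assume "\<exists>X Y. sdp_feasible C X Y \<and> (\<forall>c\<in>C. w c + X c c + Y c c \<le> t)"
  then obtain X Y where "sdp_feasible C X Y" "\<forall>c\<in>C. w c + X c c + Y c c \<le> t"
    by blast
  then show "\<exists>X Y. psd_complex C X \<and> psd_complex C Y \<and>
            (\<forall>c1\<in>C. \<forall>c2\<in>C. c1 \<noteq> c2 \<longrightarrow> X c1 c2 - Y c1 c2 = 1) \<and>
            (\<forall>c\<in>C. Re (X c c) + Re (Y c c) \<le> t - w c)"
    by (intro exI[of _ "\<lambda>a b. of_real (X a b)"] exI[of _ "\<lambda>a b. of_real (Y a b)"])
      (auto simp: sdp_feasible_def psd_real_of_real simp flip: of_real_diff)
qed

definition sdp_objective :: "'v set \<Rightarrow> ('v \<Rightarrow> real) \<Rightarrow> ('v \<Rightarrow> 'v \<Rightarrow> real) \<Rightarrow> ('v \<Rightarrow> 'v \<Rightarrow> real) \<Rightarrow> real" where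
  "sdp_objective C w X Y = Max ((\<lambda>c. w c + X c c + Y c c) ` C)"

lemma sdp_value_eq_Inf:
  "sdp_value C w = Inf {sdp_objective C w X Y | X Y. sdp_feasible C X Y}"
  by (simp add: sdp_value_def sdp_feasible_def sdp_objective_def)

lemma sdp_objective_le_iff:
  assumes "finite C" "C \<noteq> {}"
  shows "sdp_objective C w X Y \<le> t \<longleftrightarrow> (\<forall>c\<in>C. w c + X c c + Y c c \<le> t)"
  using assms by (simp add: sdp_objective_def)

lemma sdp_objective_less_iff:
  assumes "finite C" "C \<noteq> {}"
  shows "sdp_objective C w X Y < t \<longleftrightarrow> (\<forall>c\<in>C. w c + X c c + Y c c < t)"
  using assms by (simp add: sdp_objective_def)

lemma sdp_objective_ge_child:
  assumes "finite C" "sdp_feasible C X Y" "c \<in> C"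
  shows "w c \<le> sdp_objective C w X Y"
proof -
  have "psd_real C X" and "psd_real C Y"
    using assms(2) by (simp_all add: sdp_feasible_def)
  then have "0 \<le> X c c" and "0 \<le> Y c c"
    using psd_real_diag_nonneg[OF assms(1) _ assms(3)] by blast+
  moreover have "w c + X c c + Y c c \<le> sdp_objective C w X Y"
    unfolding sdp_objective_def using assms by (intro Max_ge) auto
  ultimately show ?thesis by linarith
qed

lemma sdp_objectives_nonempty: "{sdp_objective C w X Y | X Y. sdp_feasible C X Y} \<noteq> {}"
  using sdp_feasible_const by blast

lemma sdp_objectives_ge_child:
  assumes "finite C" "c \<in> C"
  shows "\<forall>m\<in>{sdp_objective C w X Y | X Y. sdp_feasible C X Y}. w c \<le> m"
  using sdp_objective_ge_child[OF assms(1) _ assms(2)] by blast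

lemma sdp_value_ge_child:
  assumes "finite C" "c \<in> C"
  shows "w c \<le> sdp_value C w"
  unfolding sdp_value_eq_Inf
  using cInf_greatest[OF sdp_objectives_nonempty] sdp_objectives_ge_child[OF assms] by blast

lemma sdp_value_approx:
  assumes "e > 0"
  shows "\<exists>X Y. sdp_feasible C X Y \<and> sdp_objective C w X Y < sdp_value C w + e"
proof -
  have "Inf {sdp_objective C w X Y | X Y. sdp_feasible C X Y} < sdp_value C w + e"
    unfolding sdp_value_eq_Inf using assms by simp
  then show ?thesis
    using cInf_lessD[OF sdp_objectives_nonempty] by blast
qed

lemma sdp_feasible_abs_le:
  assumes "finite C" "sdp_feasible C X Y" "\<forall>c\<in>C. w c + X c c + Y c c \<le> t" "a \<in> C" "b \<in> C"
  shows "\<bar>X a b\<bar> \<le> 2 * t - w a - w b" and "\<bar>Y a b\<bar> \<le> 2 * t - w a - w b"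
proof -
  have psd: "psd_real C X" "psd_real C Y"
    using assms(2) by (simp_all add: sdp_feasible_def)
  have "0 \<le> X c c" "0 \<le> Y c c" "w c + X c c + Y c c \<le> t" if "c \<in> C" for c
    using psd_real_diag_nonneg[OF assms(1) psd(1) that] psd_real_diag_nonneg[OF assms(1) psd(2) that]
      assms(3) that by auto
  with assms(4,5) psd_real_abs_le[OF assms(1) psd(1) assms(4,5)] psd_real_abs_le[OF assms(1) psd(2) assms(4,5)]
  show "\<bar>X a b\<bar> \<le> 2 * t - w a - w b" and "\<bar>Y a b\<bar> \<le> 2 * t - w a - w b"
    by (smt (verit))+
qed

lemma sdp_feasible_convergent_subseq:
  fixes Xs Ys :: "nat \<Rightarrow> 'v \<Rightarrow> 'v \<Rightarrow> real"
  assumes "finite C" and feasible: "\<And>k. sdp_feasible C (Xs k) (Ys k)"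
    and "\<And>k. \<forall>c\<in>C. w c + Xs k c c + Ys k c c \<le> t"
  shows "\<exists>X Y r. strict_mono r \<and> sdp_feasible C X Y \<and>
    (\<forall>a\<in>C. \<forall>b\<in>C. (\<lambda>k. Xs (r k) a b) \<longlonglongrightarrow> X a b \<and> (\<lambda>k. Ys (r k) a b) \<longlonglongrightarrow> Y a b)"
proof -
  note bound = sdp_feasible_abs_le[OF assms(1) feasible assms(3)]
  have "bounded (range (\<lambda>k. (Xs k a b, Ys k a b)))" if "a \<in> C" "b \<in> C" for a b
  proof -
    have "bounded (range (\<lambda>k. Xs k a b))" "bounded (range (\<lambda>k. Ys k a b))"
      unfolding bounded_real using bound[OF that] by blast+
    then show ?thesis by (rule bounded_subset[OF bounded_Times]) auto
  qed
  then have "\<exists>l r. strict_mono r \<and>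
      (\<forall>p\<in>C \<times> C. (\<lambda>k. (Xs (r k) (fst p) (snd p), Ys (r k) (fst p) (snd p))) \<longlonglongrightarrow> l p)"
    using assms(1) by (intro bounded_family_convergent_subseq) auto
  then obtain l r where r: "strict_mono r"
    and lim: "\<And>a b. a \<in> C \<Longrightarrow> b \<in> C \<Longrightarrow> (\<lambda>k. (Xs (r k) a b, Ys (r k) a b)) \<longlonglongrightarrow> l (a, b)"
    by fastforce
  define X where "X a b = fst (l (a, b))" for a b
  define Y where "Y a b = snd (l (a, b))" for a b
  have lim_X: "(\<lambda>k. Xs (r k) a b) \<longlonglongrightarrow> X a b" and lim_Y: "(\<lambda>k. Ys (r k) a b) \<longlonglongrightarrow> Y a b"
    if "a \<in> C" "b \<in> C" for a b
    using tendsto_fst[OF lim[OF that]] tendsto_snd[OF lim[OF that]] unfolding X_def Y_def by auto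
  have "sdp_feasible C X Y"
    by (rule sdp_feasible_limit[of C "\<lambda>k. Xs (r k)" "\<lambda>k. Ys (r k)"]) (use feasible lim_X lim_Y in auto)
  with r lim_X lim_Y show ?thesis by blast
qed

lemma sdp_value_attained:
  assumes "finite C" "C \<noteq> {}"
  shows "\<exists>X Y. sdp_feasible C X Y \<and> sdp_objective C w X Y \<le> sdp_value C w"
proof -
  define s where "s = sdp_value C w"
  have "\<exists>X Y. sdp_feasible C X Y \<and> sdp_objective C w X Y < s + inverse (Suc k)" for k
    unfolding s_def by (rule sdp_value_approx) simp
  then obtain Xs Ys where feasible: "\<And>k. sdp_feasible C (Xs k) (Ys k)"
    and near: "\<And>k c. c \<in> C \<Longrightarrow> w c + Xs k c c + Ys k c c < s + inverse (Suc k)"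
    using sdp_objective_less_iff[OF assms] by metis
  have "\<forall>c\<in>C. w c + Xs k c c + Ys k c c \<le> s + 1" for k
  proof -
    have "inverse (real (Suc k)) \<le> 1" by (simp add: inverse_le_1_iff)
    with near show ?thesis by (meson less_le_trans add_left_mono less_imp_le)
  qed
  then obtain X Y r where r: "strict_mono r" and "sdp_feasible C X Y"
    and lim: "\<forall>a\<in>C. \<forall>b\<in>C. (\<lambda>k. Xs (r k) a b) \<longlonglongrightarrow> X a b \<and> (\<lambda>k. Ys (r k) a b) \<longlonglongrightarrow> Y a b"
    using sdp_feasible_convergent_subseq[where Xs=Xs and Ys=Ys, OF assms(1) feasible] by blast
  moreover have "w c + X c c + Y c c \<le> s" if "c \<in> C" for c
  proof (rule LIMSEQ_le)
    show "(\<lambda>k. w c + Xs (r k) c c + Ys (r k) c c) \<longlonglongrightarrow> w c + X c c + Y c c"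
      using lim that by (intro tendsto_intros) auto
    have "(\<lambda>k. inverse (real (Suc (r k)))) \<longlonglongrightarrow> 0"
      using LIMSEQ_subseq_LIMSEQ[OF LIMSEQ_inverse_real_of_nat r] by (simp add: o_def)
    then show "(\<lambda>k. s + inverse (real (Suc (r k)))) \<longlonglongrightarrow> s"
      using tendsto_add[OF tendsto_const] by fastforce
    show "\<exists>N. \<forall>k\<ge>N. w c + Xs (r k) c c + Ys (r k) c c \<le> s + inverse (real (Suc (r k)))"
      using near[OF that] less_imp_le by blast
  qed
  ultimately show ?thesis
    unfolding s_def using sdp_objective_le_iff[OF assms] by blast
qed

lemma sdp_value_le_iff:
  assumes "finite C" "C \<noteq> {}"
  shows "sdp_value C w \<le> t \<longleftrightarrow> (\<exists>X Y. sdp_feasible C X Y \<and> sdp_objective C w X Y \<le> t)"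
proof
  assume "sdp_value C w \<le> t"
  obtain X Y where "sdp_feasible C X Y" "sdp_objective C w X Y \<le> sdp_value C w"
    using sdp_value_attained[OF assms] by blast
  with \<open>sdp_value C w \<le> t\<close> show "\<exists>X Y. sdp_feasible C X Y \<and> sdp_objective C w X Y \<le> t"
    by force
next
  assume "\<exists>X Y. sdp_feasible C X Y \<and> sdp_objective C w X Y \<le> t"
  then obtain X Y where "sdp_feasible C X Y" "sdp_objective C w X Y \<le> t"
    by blast
  obtain c where "c \<in> C"
    using assms(2) by blast
  then have "bdd_below {sdp_objective C w X Y | X Y. sdp_feasible C X Y}"
    using sdp_objectives_ge_child[OF assms(1)] by (meson bdd_belowI)
  then have "sdp_value C w \<le> sdp_objective C w X Y"
    unfolding sdp_value_eq_Inf by (rule cInf_lower[rotated]) (use \<open>sdp_feasible C X Y\<close> in blast)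
  with \<open>sdp_objective C w X Y \<le> t\<close> show "sdp_value C w \<le> t"
    by linarith
qed

lemma weighting_scheme_iff:
  assumes "\<And>v. v \<in> V \<Longrightarrow> finite (ch v)"
  shows "weighting_scheme V ch w \<longleftrightarrow>
     (\<forall>v\<in>V. 0 \<le> w v) \<and> (\<forall>v\<in>V. is_leaf ch v \<longrightarrow> w v = 0) \<and>
     (\<forall>v\<in>V. \<not> is_leaf ch v \<longrightarrow>
        (\<exists>X Y. sdp_feasible (ch v) X Y \<and> sdp_objective (ch v) w X Y \<le> w v))"
proof -
  have "(\<exists>X Y. psd_complex (ch v) X \<and> psd_complex (ch v) Y \<and>
            (\<forall>c1\<in>ch v. \<forall>c2\<in>ch v. c1 \<noteq> c2 \<longrightarrow> X c1 c2 - Y c1 c2 = 1) \<and>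
            (\<forall>c\<in>ch v. Re (X c c) + Re (Y c c) \<le> w v - w c))
     \<longleftrightarrow> (\<exists>X Y. sdp_feasible (ch v) X Y \<and> sdp_objective (ch v) w X Y \<le> w v)"
    if "v \<in> V" "\<not> is_leaf ch v" for v
  proof -
    have "ch v \<noteq> {}"
      using that(2) by (simp add: is_leaf_def)
    then show ?thesis
      using exists_psd_complex_iff_sdp_feasible[OF assms[OF that(1)]]
        sdp_objective_le_iff[OF assms[OF that(1)]] by simp
  qed
  then show ?thesis
    unfolding weighting_scheme_def by (simp cong: imp_cong)
qed

lemma sdp_objective_mono:
  assumes "finite C" "C \<noteq> {}" "\<And>c. c \<in> C \<Longrightarrow> w c \<le> w' c"
  shows "sdp_objective C w X Y \<le> sdp_objective C w' X Y"
proof -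
  have "w' c + X c c + Y c c \<le> sdp_objective C w' X Y" if "c \<in> C" for c
    unfolding sdp_objective_def using assms(1) that by (intro Max_ge) auto
  with assms show ?thesis
    by (force simp: sdp_objective_le_iff)
qed

lemma rooted_tree_children_finite:
  assumes "rooted_tree V r ch" "v \<in> V"
  shows "finite (ch v)"
  using assms unfolding rooted_tree_def by (meson finite_subset)

lemma rooted_tree_wf_children:
  assumes "rooted_tree V r ch"
  shows "wf {(c, v). v \<in> V \<and> c \<in> ch v}"
proof -
  define E where "E = {(v, c). v \<in> V \<and> c \<in> ch v}"
  have fin: "finite V" and sub: "\<And>v. v \<in> V \<Longrightarrow> ch v \<subseteq> V"
    and root: "\<And>v. v \<in> V \<Longrightarrow> r \<notin> ch v"
    and parent: "\<And>u. u \<in> V - {r} \<Longrightarrow> \<exists>!p. p \<in> V \<and> u \<in> ch p"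
    and reach: "\<And>v. v \<in> V \<Longrightarrow> (r, v) \<in> E\<^sup>*"
    using assms unfolding rooted_tree_def E_def by blast+
  have "finite E"
    by (rule finite_subset[of _ "V \<times> V"]) (use fin sub in \<open>auto simp: E_def\<close>)
  have no_cycle: "(v, v) \<notin> E\<^sup>+" if "(r, v) \<in> E\<^sup>*" for v
    using that
  proof (induction rule: rtrancl_induct)
    case base
    show ?case
    proof
      assume "(r, r) \<in> E\<^sup>+"
      then obtain p where "(p, r) \<in> E" by (metis tranclD2)
      then show False using root unfolding E_def by blast
    qed
  next
    case (step u v)
    show ?case
    proof
      assume "(v, v) \<in> E\<^sup>+"
      then obtain p where "(v, p) \<in> E\<^sup>*" "(p, v) \<in> E" by (metis tranclD2)
      have "u \<in> V" "v \<in> ch u" "v \<in> V - {r}"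
        using step(2) sub root unfolding E_def by auto
      \<comment> \<open>the cycle enters v through its unique parent u, so u lies on a cycle too\<close>
      moreover have "p \<in> V" "v \<in> ch p"
        using \<open>(p, v) \<in> E\<close> unfolding E_def by auto
      ultimately have "p = u"
        using parent by blast
      then have "(u, u) \<in> E\<^sup>+"
        using rtrancl_into_trancl2[OF step(2)] \<open>(v, p) \<in> E\<^sup>*\<close> by simp
      with step(3) show False by blast
    qed
  qed
  have "acyclic E"
    unfolding acyclic_def
  proof
    fix v
    show "(v, v) \<notin> E\<^sup>+"
    proof
      assume "(v, v) \<in> E\<^sup>+"
      moreover from this obtain p where "(p, v) \<in> E" by (metis tranclD2)
      then have "v \<in> V" using sub unfolding E_def by blast
      ultimately show False using no_cycle[OF reach] by blast
    qed
  qed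
  with \<open>finite E\<close> have "wf (E\<inverse>)"
    by (rule finite_acyclic_wf_converse)
  moreover have "E\<inverse> = {(c, v). v \<in> V \<and> c \<in> ch v}"
    unfolding E_def by auto
  ultimately show ?thesis by simp
qed

lemma rooted_tree_induct [consumes 2, case_names step]:
  assumes "rooted_tree V r ch" "v \<in> V"
    and step: "\<And>v. v \<in> V \<Longrightarrow> (\<And>c. c \<in> ch v \<Longrightarrow> P c) \<Longrightarrow> P v"
  shows "P v"
proof -
  have "v \<in> V \<longrightarrow> P v"
    using rooted_tree_wf_children[OF assms(1)]
  proof (induction v rule: wf_induct_rule)
    case (less v)
    have "ch v \<subseteq> V" if "v \<in> V"
      using assms(1) that unfolding rooted_tree_def by blast
    with less show ?case by (blast intro: step)
  qed
  with assms(2) show ?thesis by blast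
qed

lemma bottom_up_weighting_scheme:
  assumes tree: "rooted_tree V r ch"
    and leaf: "\<forall>v\<in>V. is_leaf ch v \<longrightarrow> w v = 0"
    and internal: "\<forall>v\<in>V. \<not> is_leaf ch v \<longrightarrow> w v = sdp_value (ch v) w"
  shows "weighting_scheme V ch w"
proof -
  note fin = rooted_tree_children_finite[OF tree]
  have certificate: "\<exists>X Y. sdp_feasible (ch v) X Y \<and> sdp_objective (ch v) w X Y \<le> w v"
    if "v \<in> V" "\<not> is_leaf ch v" for v
  proof -
    have "ch v \<noteq> {}"
      using that(2) by (simp add: is_leaf_def)
    moreover have "sdp_value (ch v) w \<le> w v"
      using internal that by simp
    ultimately show ?thesis
      using sdp_value_le_iff[OF fin[OF that(1)]] by blast
  qed
  have "0 \<le> w v" if "v \<in> V" for v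
    using tree that
  proof (induction v rule: rooted_tree_induct)
    case (step v)
    show ?case
    proof (cases "is_leaf ch v")
      case True
      with leaf step(1) show ?thesis by simp
    next
      case False
      then obtain c where "c \<in> ch v"
        by (auto simp: is_leaf_def)
      then have "w c \<le> sdp_value (ch v) w"
        by (rule sdp_value_ge_child[OF fin[OF step(1)]])
      moreover have "w v = sdp_value (ch v) w"
        using internal step(1) False by blast
      ultimately show ?thesis
        using step(2)[OF \<open>c \<in> ch v\<close>] by linarith
    qed
  qed
  with leaf certificate show ?thesis
    by (simp add: weighting_scheme_iff fin)
qed

lemma bottom_up_le_weighting_scheme:
  assumes tree: "rooted_tree V r ch"
    and leaf: "\<forall>v\<in>V. is_leaf ch v \<longrightarrow> w v = 0"
    and internal: "\<forall>v\<in>V. \<not> is_leaf ch v \<longrightarrow> w v = sdp_value (ch v) w"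
    and scheme: "weighting_scheme V ch w'"
    and "v \<in> V"
  shows "w v \<le> w' v"
  using tree \<open>v \<in> V\<close>
proof (induction v rule: rooted_tree_induct)
  case (step v)
  note fin = rooted_tree_children_finite[OF tree step(1)]
  have w': "\<forall>v\<in>V. 0 \<le> w' v"
    "\<forall>v\<in>V. \<not> is_leaf ch v \<longrightarrow> (\<exists>X Y. sdp_feasible (ch v) X Y \<and> sdp_objective (ch v) w' X Y \<le> w' v)"
    using scheme by (simp_all add: weighting_scheme_iff rooted_tree_children_finite[OF tree])
  show ?case
  proof (cases "is_leaf ch v")
    case True
    with leaf w'(1) step(1) show ?thesis by simp
  next
    case False
    then have "ch v \<noteq> {}"
      by (simp add: is_leaf_def)
    obtain X Y where "sdp_feasible (ch v) X Y" "sdp_objective (ch v) w' X Y \<le> w' v"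
      using w'(2) step(1) False by blast
    moreover have "sdp_objective (ch v) w X Y \<le> sdp_objective (ch v) w' X Y"
      using sdp_objective_mono[OF fin \<open>ch v \<noteq> {}\<close>] step(2) by blast
    ultimately have "sdp_value (ch v) w \<le> w' v"
      using sdp_value_le_iff[OF fin \<open>ch v \<noteq> {}\<close>] order_trans by blast
    with internal step(1) False show ?thesis by simp
  qed
qed

theorem theorem6p3:
  fixes V :: "'v set" and r :: 'v and ch :: "'v \<Rightarrow> 'v set" and w :: "'v \<Rightarrow> real"
  assumes "rooted_tree V r ch"
    and "\<forall>v\<in>V. is_leaf ch v \<longrightarrow> w v = 0"
    and "\<forall>v\<in>V. \<not> is_leaf ch v \<longrightarrow> w v = sdp_value (ch v) w"
  shows "weighting_scheme V ch w \<and> w r = WDT V r ch"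
proof -
  have scheme: "weighting_scheme V ch w"
    by (rule bottom_up_weighting_scheme[OF assms])
  have "r \<in> V"
    using assms(1) by (simp add: rooted_tree_def)
  then have "w r \<le> w' r" if "weighting_scheme V ch w'" for w'
    by (rule bottom_up_le_weighting_scheme[OF assms that])
  then have "WDT V r ch = w r"
    unfolding WDT_def using scheme by (intro cInf_eq_minimum) blast+
  with scheme show ?thesis by simp
qed

end
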